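(* Let $U$ be a nonnegative, progressively measurable, right-continuous process and fix $t\ge0$. Let $A_t=\{\mathbb E[\int_t^\infty U_s^\theta ds\mid\mathcal F_t]>0\}$ and $$B_t=\bigcup_{T\in\mathbb Q,\,T\ge t}\ \bigcup_{\epsilon\in\mathbb Q,\,\epsilon>0}\big\{\mathbb E[\mathbf 1_{\{U_T\ge\epsilon\}}\mid\mathcal F_t]>0\big\}.$$ Then $\mathbb P(A_t\setminus B_t)=0$.
   Context: Work on a filtered probability space $(\Omega,\mathcal F,(\mathcal F_t)_{t\ge0},\mathbb P)$ with complete continuous filtration and trivial $\mathcal F_0$; $\theta>1$ is a fixed constant. *)

theory Defs
  imports "HOL-Probability.Probability"
begin

text \<open>A filtration indexed by the time set [0,\<infinity>) (values of F at negative times are irrelevant),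
  consisting of sub-sigma-algebras of M, increasing, complete, right- and left-continuous,
  with F 0 trivial (every event of F 0 has probability 0 or 1).\<close>

definition filtration_on :: "'a measure \<Rightarrow> (real \<Rightarrow> 'a measure) \<Rightarrow> bool" where
  "filtration_on M F \<longleftrightarrow>
     (\<forall>t\<ge>0. subalgebra M (F t)) \<and>
     (\<forall>s t. 0 \<le> s \<longrightarrow> s \<le> t \<longrightarrow> sets (F s) \<subseteq> sets (F t))"

definition complete_filtration :: "'a measure \<Rightarrow> (real \<Rightarrow> 'a measure) \<Rightarrow> bool" where
  "complete_filtration M F \<longleftrightarrow>
     (\<forall>N. N \<subseteq> space M \<and> (\<exists>N'\<in>null_sets M. N \<subseteq> N') \<longrightarrow> N \<in> sets (F 0))"

definition continuous_filtration :: "'a measure \<Rightarrow> (real \<Rightarrow> 'a measure) \<Rightarrow> bool" where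
  "continuous_filtration M F \<longleftrightarrow>
     (\<forall>t\<ge>0. sets (F t) = (\<Inter>s\<in>{t<..}. sets (F s))) \<and>
     (\<forall>t>0. sets (F t) = sigma_sets (space M) (\<Union>s\<in>{0..<t}. sets (F s)))"

definition trivial_initial :: "'a measure \<Rightarrow> (real \<Rightarrow> 'a measure) \<Rightarrow> bool" where
  "trivial_initial M F \<longleftrightarrow> (\<forall>A\<in>sets (F 0). measure M A = 0 \<or> measure M A = 1)"

definition progressively_measurable ::
  "(real \<Rightarrow> 'a measure) \<Rightarrow> (real \<Rightarrow> 'a \<Rightarrow> real) \<Rightarrow> bool" where
  "progressively_measurable F U \<longleftrightarrow>
     (\<forall>t\<ge>0. (\<lambda>(s, \<omega>). U s \<omega>) \<in> borel_measurable (restrict_space borel {0..t} \<Otimes>\<^sub>M F t))"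

end

theory Submission
  imports Defs
begin

(* Off the F_t-measurable set B_t every conditional probability P(U_T >= eps | F_t) vanishes,
   and integrating against the indicator of the complement turns this into: almost surely off
   B_t, U_T < eps for all rational T >= t and eps > 0. Nonnegativity and right-continuity then
   give U_s = 0 for all s >= t, so the integral of U^theta over [t, oo) vanishes a.s. off B_t,
   and hence so does its conditional expectation. *)

lemma right_continuous_vanishing_on_Rats:
  fixes f :: "real \<Rightarrow> 'b::{t1_space, zero}"
  assumes cont: "continuous (at_right s) f" and zero: "\<And>q. q \<in> \<rat> \<Longrightarrow> s < q \<Longrightarrow> f q = 0"
  shows "f s = 0"
proof (rule ccontr)
  assume "f s \<noteq> 0"
  moreover have "(f \<longlongrightarrow> f s) (at_right s)"
    using cont by (simp add: continuous_within)
  ultimately have "eventually (\<lambda>r. f r \<noteq> 0) (at_right s)"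
    by (intro tendsto_imp_eventually_ne)
  then obtain b where "s < b" and nonzero: "\<And>r. s < r \<Longrightarrow> r < b \<Longrightarrow> f r \<noteq> 0"
    unfolding eventually_at_right_field by blast
  then obtain q where "q \<in> \<rat>" "s < q" "q < b"
    using Rats_dense_in_real by blast
  with nonzero zero show False by blast
qed

lemma nonneg_right_continuous_vanishing_from:
  fixes f :: "real \<Rightarrow> real"
  assumes nonneg: "\<And>s. t \<le> s \<Longrightarrow> 0 \<le> f s"
    and cont: "\<And>s. t \<le> s \<Longrightarrow> continuous (at_right s) f"
    and small: "\<And>q \<epsilon>. q \<in> \<rat> \<Longrightarrow> t \<le> q \<Longrightarrow> \<epsilon> \<in> \<rat> \<Longrightarrow> 0 < \<epsilon> \<Longrightarrow> f q < \<epsilon>"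
    and "t \<le> s"
  shows "f s = 0"
proof (rule right_continuous_vanishing_on_Rats[OF cont[OF \<open>t \<le> s\<close>]])
  fix q assume "q \<in> \<rat>" "s < q"
  with \<open>t \<le> s\<close> have "t \<le> q" by simp
  have "\<not> 0 < f q"
  proof
    assume "0 < f q"
    then obtain \<epsilon> where "\<epsilon> \<in> \<rat>" "0 < \<epsilon>" "\<epsilon> < f q"
      using Rats_dense_in_real by blast
    with small[OF \<open>q \<in> \<rat>\<close> \<open>t \<le> q\<close>] show False by fastforce
  qed
  with nonneg[OF \<open>t \<le> q\<close>] show "f q = 0" by simp
qed

lemma progressively_measurable_at:
  assumes "progressively_measurable F U" and "0 \<le> T"
  shows "U T \<in> borel_measurable (F T)"
proof -
  have "(\<lambda>\<omega>. (T, \<omega>)) \<in> F T \<rightarrow>\<^sub>M restrict_space borel {0..T} \<Otimes>\<^sub>M F T"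
    using \<open>0 \<le> T\<close> by (intro measurable_Pair measurable_const measurable_ident_sets)
      (auto simp: space_restrict_space)
  from measurable_comp[OF this] assms show ?thesis
    unfolding progressively_measurable_def by (auto simp: o_def)
qed

lemma progressively_measurable_borel_measurable:
  assumes "filtration_on M F" and "progressively_measurable F U" and "0 \<le> T"
  shows "U T \<in> borel_measurable M"
  using assms progressively_measurable_at[of F U T] measurable_from_subalg
  unfolding filtration_on_def by blast

context sigma_finite_subalgebra
begin

lemma nn_cond_exp_AE_zero_on:
  assumes "D \<in> sets F" and zero: "AE x in M. x \<in> D \<longrightarrow> f x = 0"
  shows "AE x in M. x \<in> D \<longrightarrow> nn_cond_exp M F f x = 0"
proof (cases "f \<in> borel_measurable M")
  case True
  note [measurable] = True
  have [measurable]: "D \<in> sets M"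
    using \<open>D \<in> sets F\<close> subalg by (auto simp: subalgebra_def)
  have "(\<integral>\<^sup>+ x. indicator D x * nn_cond_exp M F f x \<partial>M) = (\<integral>\<^sup>+ x. indicator D x * f x \<partial>M)"
    using \<open>D \<in> sets F\<close> True by (intro nn_cond_exp_intg) auto
  also have "\<dots> = 0"
    using zero by (subst nn_integral_0_iff_AE) (auto elim!: AE_mp simp: indicator_def)
  finally show ?thesis
    by (subst (asm) nn_integral_0_iff_AE) (auto elim!: AE_mp simp: indicator_def)
qed (simp add: nn_cond_exp_def) \<comment> \<open>for non-measurable f, nn_cond_exp is identically 0\<close>

lemma AE_zero_on_if_nn_cond_exp_zero_on:
  assumes [measurable]: "f \<in> borel_measurable M" and "D \<in> sets F"
    and zero: "AE x in M. x \<in> D \<longrightarrow> nn_cond_exp M F f x = 0"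
  shows "AE x in M. x \<in> D \<longrightarrow> f x = 0"
proof -
  have [measurable]: "D \<in> sets M"
    using \<open>D \<in> sets F\<close> subalg by (auto simp: subalgebra_def)
  have "(\<integral>\<^sup>+ x. indicator D x * f x \<partial>M) = (\<integral>\<^sup>+ x. indicator D x * nn_cond_exp M F f x \<partial>M)"
    using \<open>D \<in> sets F\<close> by (intro nn_cond_exp_intg[symmetric]) auto
  also have "\<dots> = 0"
    using zero by (subst nn_integral_0_iff_AE) (auto elim!: AE_mp simp: indicator_def)
  finally show ?thesis
    by (subst (asm) nn_integral_0_iff_AE) (auto elim!: AE_mp simp: indicator_def)
qed

lemma emeasure_pos_nn_cond_exp_diff_eq_0:
  assumes "B \<in> sets F" and zero: "AE x in M. x \<notin> B \<longrightarrow> f x = 0"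
  shows "emeasure M ({\<omega> \<in> space M. 0 < nn_cond_exp M F f \<omega>} - B) = 0"
proof -
  have space_F: "space F = space M" and "B \<in> sets M"
    using subalg \<open>B \<in> sets F\<close> by (auto simp: subalgebra_def)
  have "space M - B \<in> sets F"
    using \<open>B \<in> sets F\<close> space_F by (metis sets.compl_sets)
  then have "AE x in M. x \<in> space M - B \<longrightarrow> nn_cond_exp M F f x = 0"
    using zero by (intro nn_cond_exp_AE_zero_on) (auto elim!: AE_mp)
  moreover have "{\<omega> \<in> space M. 0 < nn_cond_exp M F f \<omega>} - B
      = {x \<in> space M. \<not> (x \<in> space M - B \<longrightarrow> nn_cond_exp M F f x = 0)}"
    by (auto simp: zero_less_iff_neq_zero)
  moreover have "{\<omega> \<in> space M. 0 < nn_cond_exp M F f \<omega>} - B \<in> sets M"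
    using \<open>B \<in> sets M\<close> by measurable
  ultimately show ?thesis
    by (simp add: AE_iff_measurable)
qed

lemma AE_outside_pos_cond_prob:
  fixes S :: "'i \<Rightarrow> 'a set"
  assumes "countable I" and S_sets: "\<And>i. i \<in> I \<Longrightarrow> S i \<in> sets M"
  defines "B \<equiv> \<Union>i\<in>I. {\<omega> \<in> space M. 0 < nn_cond_exp M F (indicator (S i)) \<omega>}"
  shows "B \<in> sets F" and "AE x in M. x \<notin> B \<longrightarrow> (\<forall>i\<in>I. x \<notin> S i)"
proof -
  have space_F: "space F = space M"
    using subalg by (simp add: subalgebra_def)
  have "{\<omega> \<in> space F. 0 < nn_cond_exp M F h \<omega>} \<in> sets F" for h
    by measurable
  then show "B \<in> sets F"
    unfolding B_def space_F by (intro sets.countable_UN''[OF \<open>countable I\<close>])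
  then have D: "space M - B \<in> sets F"
    using space_F by (metis sets.compl_sets)
  have "AE x in M. x \<notin> B \<longrightarrow> x \<notin> S i" if "i \<in> I" for i
  proof -
    have [measurable]: "S i \<in> sets M"
      using S_sets[OF that] .
    have cond_prob_zero: "AE x in M. x \<in> space M - B \<longrightarrow> nn_cond_exp M F (indicator (S i)) x = 0"
    proof (intro AE_I2 impI)
      fix x assume "x \<in> space M - B"
      with that show "nn_cond_exp M F (indicator (S i)) x = 0"
        by (auto simp: B_def)
    qed
    have "AE x in M. x \<in> space M - B \<longrightarrow> indicator (S i) x = (0::ennreal)"
      by (rule AE_zero_on_if_nn_cond_exp_zero_on[OF _ D cond_prob_zero]) measurable
    then show ?thesis
      by (rule AE_mp) (intro AE_I2, auto split: split_indicator)
  qed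
  then have "AE x in M. \<forall>i\<in>I. x \<notin> B \<longrightarrow> x \<notin> S i"
    by (subst AE_ball_countable[OF \<open>countable I\<close>]) blast
  then show "AE x in M. x \<notin> B \<longrightarrow> (\<forall>i\<in>I. x \<notin> S i)"
    by (rule AE_mp) (intro AE_I2, blast)
qed

end

theorem lemma8p3:
  fixes M :: "'a measure" and F :: "real \<Rightarrow> 'a measure"
    and U :: "real \<Rightarrow> 'a \<Rightarrow> real" and \<theta> t :: real
  assumes "prob_space M"
    and "filtration_on M F" and "complete_filtration M F"
    and "continuous_filtration M F" and "trivial_initial M F"
    and "\<theta> > 1"
    and "\<And>s \<omega>. s \<ge> 0 \<Longrightarrow> \<omega> \<in> space M \<Longrightarrow> U s \<omega> \<ge> 0"
    and "progressively_measurable F U"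
    and "\<And>s \<omega>. s \<ge> 0 \<Longrightarrow> \<omega> \<in> space M \<Longrightarrow> continuous (at_right s) (\<lambda>r. U r \<omega>)"
    and "t \<ge> 0"
  shows "emeasure M
     ({\<omega> \<in> space M. 0 < nn_cond_exp M (F t)
          (\<lambda>x. \<integral>\<^sup>+ s \<in> {t..}. ennreal (U s x powr \<theta>) \<partial>lborel) \<omega>}
      - (\<Union>T\<in>{T \<in> \<rat>. t \<le> T}. \<Union>\<epsilon>\<in>{\<epsilon> \<in> \<rat>. 0 < \<epsilon>}.
           {\<omega> \<in> space M. 0 < nn_cond_exp M (F t)
               (indicator {x \<in> space M. \<epsilon> \<le> U T x}) \<omega>})) = 0"
proof -
  interpret prob_space M by fact
  interpret Ft: finite_measure_subalgebra M "F t"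
    using assms(2,10) by unfold_locales (auto simp: filtration_on_def)
  define I where "I = {T \<in> \<rat>. t \<le> T} \<times> {\<epsilon> \<in> \<rat>. 0 < (\<epsilon>::real)}"
  define S where "S = (\<lambda>(T, \<epsilon>). {x \<in> space M. \<epsilon> \<le> U T x})"
  define B where "B = (\<Union>T\<in>{T \<in> \<rat>. t \<le> T}. \<Union>\<epsilon>\<in>{\<epsilon> \<in> \<rat>. 0 < \<epsilon>}.
    {\<omega> \<in> space M. 0 < nn_cond_exp M (F t) (indicator {x \<in> space M. \<epsilon> \<le> U T x}) \<omega>})"
  have B_eq: "B = (\<Union>p\<in>I. {\<omega> \<in> space M. 0 < nn_cond_exp M (F t) (indicator (S p)) \<omega>})"
    unfolding B_def I_def S_def by (simp add: Sigma_def UN_UN_flatten)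
  have countable_I: "countable I"
    unfolding I_def by (intro countable_SIGMA countable_subset[OF _ countable_rat]) auto
  have S_sets: "S p \<in> sets M" if "p \<in> I" for p
    using that progressively_measurable_borel_measurable[OF assms(2,8), of "fst p"] \<open>t \<ge> 0\<close>
    by (auto simp: I_def S_def split: prod.splits)
  have B_sets: "B \<in> sets (F t)"
    unfolding B_eq using countable_I S_sets by (rule Ft.AE_outside_pos_cond_prob)
  have "AE x in M. x \<notin> B \<longrightarrow> (\<forall>p\<in>I. x \<notin> S p)"
    unfolding B_eq using countable_I S_sets by (rule Ft.AE_outside_pos_cond_prob)
  then have "AE x in M. x \<notin> B \<longrightarrow> (\<integral>\<^sup>+ s \<in> {t..}. ennreal (U s x powr \<theta>) \<partial>lborel) = 0"
  proof (rule AE_mp, intro AE_I2 impI)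
    fix x assume "x \<in> space M" "x \<notin> B \<longrightarrow> (\<forall>p\<in>I. x \<notin> S p)" "x \<notin> B"
    then have "U s x = 0" if "t \<le> s" for s
      using assms(7,9,10) that
      by (intro nonneg_right_continuous_vanishing_from[where f = "\<lambda>r. U r x"])
        (auto simp: I_def S_def not_le)
    then show "(\<integral>\<^sup>+ s \<in> {t..}. ennreal (U s x powr \<theta>) \<partial>lborel) = 0"
      by (intro nn_integral_zero' AE_I2) (auto simp: indicator_def)
  qed
  from Ft.emeasure_pos_nn_cond_exp_diff_eq_0[OF B_sets this] show ?thesis
    unfolding B_def .
qed

end
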